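(* Let $(X,\|\cdot\|)$ be a convex normed space and let $S\subset X$ be a subset such that every sequence in $S$ has a subsequence converging in $X$. Then $S$ is a uniformly convex subset of $X$.
   Context: A normed space $X$ is convex if for all $u,v\in X$ with $u\ne v$ and $\|u\|=\|v\|=1$ we have $\|u+v\|<2$. A subset $S\subset X$ is called uniformly convex if for every $\varepsilon>0$ there exists $\delta\in(0,1)$ such that for all $u,v\in S$ with $\|u\|=\|v\|=1$ and $\|u-v\|\ge\varepsilon$ we have $\|u+v\|\le 2-\delta$ (in particular, a subset containing no unit vectors is uniformly convex). *)

theory Defs
  imports "HOL-Analysis.Analysis"
begin

definition convex_normed_space :: "'a::real_normed_vector itself \<Rightarrow> bool" where
  "convex_normed_space TYPE('a) \<longleftrightarrow>
     (\<forall>u v :: 'a. u \<noteq> v \<and> norm u = 1 \<and> norm v = 1 \<longrightarrow> norm (u + v) < 2)"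

definition uniformly_convex_subset :: "'a::real_normed_vector set \<Rightarrow> bool" where
  "uniformly_convex_subset S \<longleftrightarrow>
     (\<forall>\<epsilon>>0. \<exists>\<delta>. 0 < \<delta> \<and> \<delta> < 1 \<and>
        (\<forall>u\<in>S. \<forall>v\<in>S. norm u = 1 \<and> norm v = 1 \<and> norm (u - v) \<ge> \<epsilon>
           \<longrightarrow> norm (u + v) \<le> 2 - \<delta>))"

end

theory Submission
  imports Defs
begin

(* If S were not uniformly convex, there would be pairs of unit vectors u n, v n in S with
   norm (u n - v n) >= e and norm (u n + v n) -> 2. Along a common convergent subsequence the
   limits a, b satisfy norm a = norm b = 1, norm (a - b) >= e and norm (a + b) = 2, which
   contradicts the convexity of the space. *)

lemma not_uniformly_convex_subsetE:
  fixes S :: "'a::real_normed_vector set"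
  assumes "\<not> uniformly_convex_subset S"
  obtains \<epsilon> u v where "\<epsilon> > 0" and "\<And>n. u n \<in> S" and "\<And>n. v n \<in> S"
    and "\<And>n. norm (u n) = 1" and "\<And>n. norm (v n) = 1" and "\<And>n. \<epsilon> \<le> norm (u n - v n)"
    and "(\<lambda>n. norm (u n + v n)) \<longlonglongrightarrow> 2"
proof -
  define d :: "nat \<Rightarrow> real" where "d n = inverse (real (Suc (Suc n)))" for n
  have d_bounds: "0 < d n \<and> d n < 1" for n
    by (simp add: d_def inverse_less_1_iff)
  obtain \<epsilon> where "\<epsilon> > 0" and "\<And>\<delta>. 0 < \<delta> \<Longrightarrow> \<delta> < 1 \<Longrightarrow> \<exists>u\<in>S. \<exists>v\<in>S.
      norm u = 1 \<and> norm v = 1 \<and> \<epsilon> \<le> norm (u - v) \<and> 2 - \<delta> < norm (u + v)"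
    using assms unfolding uniformly_convex_subset_def by (meson not_le)
  then have "\<forall>n. \<exists>u v. u \<in> S \<and> v \<in> S \<and> norm u = 1 \<and> norm v = 1 \<and> \<epsilon> \<le> norm (u - v)
      \<and> 2 - d n < norm (u + v)"
    using d_bounds by blast
  then obtain u v where uv: "\<And>n. u n \<in> S \<and> v n \<in> S \<and> norm (u n) = 1 \<and> norm (v n) = 1
      \<and> \<epsilon> \<le> norm (u n - v n) \<and> 2 - d n < norm (u n + v n)"
    by metis
  have lim: "(\<lambda>n. 2 - d n) \<longlonglongrightarrow> 2"
    using LIMSEQ_Suc [OF LIMSEQ_inverse_real_of_nat_add_minus [of 2]] by (simp add: d_def)
  have lower: "\<forall>n. 2 - d n \<le> norm (u n + v n)"
    using uv by (simp add: less_imp_le)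
  have upper: "\<forall>n. norm (u n + v n) \<le> 2"
    using norm_triangle_ineq uv by (metis one_add_one)
  have sum: "(\<lambda>n. norm (u n + v n)) \<longlonglongrightarrow> 2"
    using tendsto_sandwich [OF always_eventually [OF lower] always_eventually [OF upper] lim tendsto_const] .
  show thesis
    by (rule that [of \<epsilon> u v]) (use \<open>\<epsilon> > 0\<close> uv sum in auto)
qed

lemma convergent_common_subseq:
  fixes u v :: "nat \<Rightarrow> 'a::topological_space"
  assumes "\<And>x :: nat \<Rightarrow> 'a. (\<forall>n. x n \<in> S) \<Longrightarrow>
             \<exists>r l. strict_mono r \<and> (x \<circ> r) \<longlonglongrightarrow> l"
    and "\<And>n. u n \<in> S" and "\<And>n. v n \<in> S"
  obtains r a b where "strict_mono r" and "(u \<circ> r) \<longlonglongrightarrow> a" and "(v \<circ> r) \<longlonglongrightarrow> b"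
proof -
  obtain r a where r: "strict_mono r" and a: "(u \<circ> r) \<longlonglongrightarrow> a"
    using assms(1) [of u] assms(2) by blast
  obtain r' b where r': "strict_mono r'" and b: "(v \<circ> r \<circ> r') \<longlonglongrightarrow> b"
    using assms(1) [of "v \<circ> r"] assms(3) by auto
  show thesis
  proof (rule that)
    show "strict_mono (r \<circ> r')"
      using r r' by (simp add: strict_mono_o)
    show "(u \<circ> (r \<circ> r')) \<longlonglongrightarrow> a"
      using LIMSEQ_subseq_LIMSEQ [OF a r'] by (simp add: o_assoc)
    show "(v \<circ> (r \<circ> r')) \<longlonglongrightarrow> b"
      using b by (simp add: o_assoc)
  qed
qed

lemma norm_add_not_tendsto_2:
  fixes x y :: "nat \<Rightarrow> 'a::real_normed_vector"
  assumes "convex_normed_space TYPE('a)"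
    and x: "x \<longlonglongrightarrow> a" and y: "y \<longlonglongrightarrow> b"
    and "\<And>n. norm (x n) = 1" and "\<And>n. norm (y n) = 1"
    and "\<epsilon> > 0" and sep: "\<And>n. \<epsilon> \<le> norm (x n - y n)"
  shows "\<not> (\<lambda>n. norm (x n + y n)) \<longlonglongrightarrow> 2"
proof
  assume sum: "(\<lambda>n. norm (x n + y n)) \<longlonglongrightarrow> 2"
  have "(\<lambda>n. norm (x n)) \<longlonglongrightarrow> norm a" "(\<lambda>n. norm (y n)) \<longlonglongrightarrow> norm b"
    by (intro tendsto_norm x y)+
  then have "norm a = 1" "norm b = 1"
    using assms(4,5) by (simp_all add: LIMSEQ_const_iff)
  have "(\<lambda>n. norm (x n - y n)) \<longlonglongrightarrow> norm (a - b)"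
    by (intro tendsto_norm tendsto_diff x y)
  then have "\<epsilon> \<le> norm (a - b)"
    by (rule LIMSEQ_le_const) (use sep in blast)
  then have "a \<noteq> b"
    using \<open>\<epsilon> > 0\<close> by auto
  have "(\<lambda>n. norm (x n + y n)) \<longlonglongrightarrow> norm (a + b)"
    by (intro tendsto_norm tendsto_add x y)
  then have "norm (a + b) = 2"
    using sum by (rule LIMSEQ_unique)
  moreover have "norm (a + b) < 2"
    using assms(1) \<open>a \<noteq> b\<close> \<open>norm a = 1\<close> \<open>norm b = 1\<close>
    unfolding convex_normed_space_def by blast
  ultimately show False
    by simp
qed

theorem mainTheorem6:
  fixes S :: "'a::real_normed_vector set"
  assumes "convex_normed_space TYPE('a)"
    and "\<And>x :: nat \<Rightarrow> 'a. (\<forall>n. x n \<in> S) \<Longrightarrow>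
           \<exists>r l. strict_mono r \<and> (x \<circ> r) \<longlonglongrightarrow> l"
  shows "uniformly_convex_subset S"
proof (rule ccontr)
  assume "\<not> uniformly_convex_subset S"
  then obtain \<epsilon> :: real and u v where "\<epsilon> > 0" and "\<And>n. u n \<in> S" and "\<And>n. v n \<in> S"
    and "\<And>n. norm (u n) = 1" and "\<And>n. norm (v n) = 1"
    and "\<And>n. \<epsilon> \<le> norm (u n - v n)" and sum: "(\<lambda>n. norm (u n + v n)) \<longlonglongrightarrow> 2"
    by (elim not_uniformly_convex_subsetE) blast
  moreover obtain r a b where "strict_mono r" and "(u \<circ> r) \<longlonglongrightarrow> a" and "(v \<circ> r) \<longlonglongrightarrow> b"
    using convergent_common_subseq [OF assms(2)] calculation by blast
  moreover have "(\<lambda>n. norm ((u \<circ> r) n + (v \<circ> r) n)) \<longlonglongrightarrow> 2"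
    using LIMSEQ_subseq_LIMSEQ [OF sum \<open>strict_mono r\<close>] by (simp add: o_def)
  ultimately show False
    using norm_add_not_tendsto_2 [OF assms(1), of "u \<circ> r" a "v \<circ> r" b \<epsilon>] by simp
qed

end
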